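(* Let $V$ be finite and $n\ge2$. The functions $m_G$, as $G$ ranges over all multigraphs on $V$ without self-loops and with $|E(G)|\le n-1$, are linearly independent as functions on $(S^{n-1})^V$.
   Context: $S^{n-1}=\{x\in\mathbb{R}^n:\|x\|_2=1\}$. A multigraph on $V$ without self-loops is a finite multiset of pairs $\{u,w\}$ with $u\ne w\in V$. $m_G=\prod_{\{u,w\}\in E(G)}\langle d_u,d_w\rangle$ (with multiplicity), for $(d_u)_{u\in V}\in(S^{n-1})^V$. *)

theory Defs
  imports "HOL-Analysis.Analysis" "HOL-Library.Multiset"
begin

definition is_edge :: "'v set \<Rightarrow> bool" where
  "is_edge e \<longleftrightarrow> (\<exists>u w. u \<noteq> w \<and> e = {u, w})"

definition multigraphs :: "'v set multiset set" where
  "multigraphs = {G. \<forall>e\<in>#G. is_edge e}"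

text \<open>Inner product attached to an edge {u,w}: <d_u, d_w> (well defined by symmetry).\<close>
definition edge_ip :: "('v \<Rightarrow> real^'n) \<Rightarrow> 'v set \<Rightarrow> real" where
  "edge_ip d e = (THE r. \<exists>u w. u \<noteq> w \<and> e = {u, w} \<and> r = inner (d u) (d w))"

definition mG :: "'v set multiset \<Rightarrow> ('v \<Rightarrow> real^'n) \<Rightarrow> real" where
  "mG G d = prod_mset (image_mset (edge_ip d) G)"

definition lin_indep_on :: "'x set \<Rightarrow> ('i \<Rightarrow> 'x \<Rightarrow> real) \<Rightarrow> 'i set \<Rightarrow> bool" where
  "lin_indep_on D f I \<longleftrightarrow>
     (\<forall>F c. finite F \<and> F \<subseteq> I \<and> (\<forall>x\<in>D. (\<Sum>i\<in>F. c i * f i x) = 0) \<longrightarrow> (\<forall>i\<in>F. c i = 0))"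

end

theory Submission
  imports Defs
begin

text \<open>Suppose a nontrivial linear combination of the functions \<open>m\<^sub>G\<close> vanishes on the product of
  spheres, and let \<open>G\<^sub>0\<close>, with edges \<open>{u\<^sub>j, w\<^sub>j}\<close> (\<open>j < k\<close>), have maximal size among the graphs
  with nonzero coefficient, so \<open>k < n\<close>. Evaluate the combination at the points
  \<open>d\<^sub>v = (1 / sqrt k) (\<Sum>j<k. \<epsilon>(v, j) e\<^sub>j)\<close> for all sign patterns \<open>\<epsilon>\<close> and sum with weight
  \<open>\<Prod>j<k. \<epsilon>(u\<^sub>j, j) \<epsilon>(w\<^sub>j, j)\<close>. Expanding \<open>m\<^sub>G(d)\<close> over the ways \<open>l\<close> of assigning a coordinate
  to each edge of \<open>G\<close>, this sum counts the assignments under which every pair \<open>(v, j)\<close> is covered an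
  even number of times by the edges of \<open>G\<^sub>0\<close> (edge \<open>j\<close> at coordinate \<open>j\<close>) together with those of \<open>G\<close>.
  Every coordinate already carries an edge of \<open>G\<^sub>0\<close>, so when \<open>G\<close> has at most \<open>k\<close> edges the assignment
  must be a bijection matching the edges of \<open>G\<close> with those of \<open>G\<^sub>0\<close>. Hence the weighted sum
  isolates the coefficient of \<open>G\<^sub>0\<close>, which therefore vanishes.\<close>

lemma lin_indep_onI_separating:
  fixes f :: "'i \<Rightarrow> 'x \<Rightarrow> real" and r :: "'i \<Rightarrow> nat"
  assumes separating: "\<And>i. i \<in> I \<Longrightarrow> \<exists>(S :: 's set) P w. finite S \<and> P ` S \<subseteq> D \<and>
      (\<Sum>s\<in>S. w s * f i (P s)) \<noteq> 0 \<and>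
      (\<forall>j\<in>J. j \<noteq> i \<longrightarrow> r j \<le> r i \<longrightarrow> (\<Sum>s\<in>S. w s * f j (P s)) = 0)"
    and "I \<subseteq> J"
  shows "lin_indep_on D f I"
  unfolding lin_indep_on_def
proof (intro allI impI ballI)
  fix F c i
  assume "finite F \<and> F \<subseteq> I \<and> (\<forall>x\<in>D. (\<Sum>i\<in>F. c i * f i x) = 0)" and "i \<in> F"
  then have F: "finite F" "F \<subseteq> I" and vanish: "\<And>x. x \<in> D \<Longrightarrow> (\<Sum>i\<in>F. c i * f i x) = 0"
    by auto
  show "c i = 0"
  proof (rule ccontr)
    assume "c i \<noteq> 0"
    define Z where "Z = {j \<in> F. c j \<noteq> 0}"
    have "finite Z" "Z \<noteq> {}"
      using F \<open>i \<in> F\<close> \<open>c i \<noteq> 0\<close> by (auto simp: Z_def)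
    then have "Max (r ` Z) \<in> r ` Z"
      by (intro Max_in) auto
    then obtain i0 where "i0 \<in> Z" and "r i0 = Max (r ` Z)"
      by auto
    then have i0_max: "\<And>j. j \<in> Z \<Longrightarrow> r j \<le> r i0"
      using \<open>finite Z\<close> by simp
    have i0: "i0 \<in> I" "c i0 \<noteq> 0"
      using \<open>i0 \<in> Z\<close> F by (auto simp: Z_def)
    obtain S :: "'s set" and P w where S: "finite S" "P ` S \<subseteq> D"
      and nonzero: "(\<Sum>s\<in>S. w s * f i0 (P s)) \<noteq> 0"
      and zero: "\<forall>j\<in>J. j \<noteq> i0 \<longrightarrow> r j \<le> r i0 \<longrightarrow> (\<Sum>s\<in>S. w s * f j (P s)) = 0"
      using separating[OF \<open>i0 \<in> I\<close>] by blast
    define L where "L j = (\<Sum>s\<in>S. w s * f j (P s))" for j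
    have "0 = (\<Sum>s\<in>S. w s * (\<Sum>j\<in>F. c j * f j (P s)))"
      using S(2) vanish by (intro sum.neutral[symmetric]) (simp add: image_subset_iff)
    also have "\<dots> = (\<Sum>j\<in>F. c j * L j)"
      unfolding L_def sum_distrib_left by (subst sum.swap) (simp add: mult.left_commute)
    also have "\<dots> = c i0 * L i0 + (\<Sum>j\<in>F - {i0}. c j * L j)"
      using F(1) \<open>i0 \<in> Z\<close> unfolding Z_def by (blast intro: sum.remove)
    also have "(\<Sum>j\<in>F - {i0}. c j * L j) = 0"
    proof (rule sum.neutral, rule ballI)
      fix j assume "j \<in> F - {i0}"
      then show "c j * L j = 0"
        using F \<open>I \<subseteq> J\<close> zero i0_max unfolding L_def Z_def by (cases "c j = 0") auto
    qed
    finally show False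
      using nonzero i0 by (simp add: L_def)
  qed
qed

lemma sum_sign_vectors_prod_mset:
  fixes M :: "'a multiset"
  assumes "finite A" "set_mset M \<subseteq> A"
  shows "(\<Sum>\<epsilon>\<in>PiE A (\<lambda>_. {-1, 1::real}). prod_mset (image_mset \<epsilon> M)) =
    (if \<forall>x\<in>A. even (count M x) then 2 ^ card A else 0)"
proof -
  have "prod_mset (image_mset \<epsilon> M) = (\<Prod>x\<in>A. \<epsilon> x ^ count M x)" for \<epsilon> :: "'a \<Rightarrow> real"
    unfolding image_prod_mset_multiplicity using assms
    by (intro prod.mono_neutral_left) (auto simp: not_in_iff)
  then have "(\<Sum>\<epsilon>\<in>PiE A (\<lambda>_. {-1, 1::real}). prod_mset (image_mset \<epsilon> M)) =
      (\<Sum>\<epsilon>\<in>PiE A (\<lambda>_. {-1, 1::real}). \<Prod>x\<in>A. \<epsilon> x ^ count M x)"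
    by simp
  also have "\<dots> = (\<Prod>x\<in>A. \<Sum>s\<in>{-1, 1::real}. s ^ count M x)"
    using assms(1) by (simp only: prod_sum_PiE finite.emptyI finite_insert)
  also have "\<dots> = (\<Prod>x\<in>A. if even (count M x) then 2 else 0)"
    by (intro prod.cong) auto
  also have "\<dots> = (if \<forall>x\<in>A. even (count M x) then 2 ^ card A else 0)"
    using assms(1) by (auto simp: prod_zero_iff)
  finally show ?thesis .
qed

lemma prod_mset_image_mset_sum:
  "finite J \<Longrightarrow> prod_mset (image_mset f (sum M J)) = (\<Prod>j\<in>J. prod_mset (image_mset f (M j)))"
  by (induction J rule: finite_induct) auto

definition labelled_edges :: "'v set list \<Rightarrow> (nat \<Rightarrow> nat) \<Rightarrow> ('v \<times> nat) multiset" where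
  "labelled_edges es l = (\<Sum>i<length es. image_mset (\<lambda>v. (v, l i)) (mset_set (es ! i)))"

lemma count_labelled_edges:
  assumes "\<forall>e\<in>set es. finite e"
  shows "count (labelled_edges es l) (v, j) = card {i. i < length es \<and> l i = j \<and> v \<in> es ! i}"
proof -
  have "count (image_mset (\<lambda>v. (v, l i)) (mset_set (es ! i))) (v, j) = of_bool (l i = j \<and> v \<in> es ! i)"
    if "i < length es" for i
  proof -
    have "inj_on (\<lambda>v. (v, l i)) (es ! i)"
      by (rule inj_onI) simp
    moreover have "(v, j) \<in> (\<lambda>v. (v, l i)) ` (es ! i) \<longleftrightarrow> l i = j \<and> v \<in> es ! i"
      by auto
    ultimately show ?thesis
      using that assms by (simp add: image_mset_mset_set count_mset_set')
  qed
  then have "count (labelled_edges es l) (v, j) = (\<Sum>i<length es. of_bool (l i = j \<and> v \<in> es ! i))"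
    unfolding labelled_edges_def count_sum by (intro sum.cong) auto
  also have "\<dots> = card {i. i < length es \<and> l i = j \<and> v \<in> es ! i}"
    by (simp add: Int_def)
  finally show ?thesis .
qed

lemma count_labelled_edges_id:
  assumes "\<forall>e\<in>set es. finite e"
  shows "count (labelled_edges es id) (v, j) = of_bool (j < length es \<and> v \<in> es ! j)"
proof -
  have "{i. i < length es \<and> id i = j \<and> v \<in> es ! i} = (if j < length es \<and> v \<in> es ! j then {j} else {})"
    by auto
  then show ?thesis
    using assms by (simp add: count_labelled_edges)
qed

lemma set_mset_labelled_edges:
  assumes "\<forall>e\<in>set es. finite e" "\<forall>i<length es. l i < k"
  shows "set_mset (labelled_edges es l) \<subseteq> UNIV \<times> {..<k}"
  unfolding labelled_edges_def set_mset_sum[OF finite_lessThan] using assms by auto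

lemma mset_eq_if_nth_reindex:
  assumes "bij_betw l {..<length xs} {..<length ys}" "\<And>i. i < length xs \<Longrightarrow> xs ! i = ys ! l i"
  shows "mset xs = mset ys"
proof -
  have "xs = map (nth ys \<circ> l) [0..<length xs]"
    using assms(2) by (intro nth_equalityI) auto
  then have "mset xs = mset (map (nth ys \<circ> l) [0..<length xs])"
    by (rule arg_cong)
  also have "\<dots> = image_mset (nth ys) (image_mset l (mset_set {..<length xs}))"
    by (simp add: multiset.map_comp atLeast0LessThan)
  also have "image_mset l (mset_set {..<length xs}) = mset_set {..<length ys}"
    using assms(1) by (simp add: bij_betw_def image_mset_mset_set)
  also have "image_mset (nth ys) (mset_set {..<length ys}) = mset ys"
    by (metis atLeast0LessThan map_nth mset_map mset_upt)
  finally show ?thesis .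
qed

lemma even_labelled_edges_imp_mset_eq:
  assumes finite: "\<forall>e\<in>set es. finite e" "\<forall>e\<in>set es0. finite e"
    and nonempty: "{} \<notin> set es0"
    and length: "length es \<le> length es0"
    and labels: "\<forall>i<length es. l i < length es0"
    and even: "\<forall>x. even (count (labelled_edges es0 id + labelled_edges es l) x)"
  shows "mset es = mset es0"
proof -
  define m k where "m = length es" and "k = length es0"
  have parity: "even (of_bool (j < k \<and> v \<in> es0 ! j) + card {i. i < m \<and> l i = j \<and> v \<in> es ! i})"
    for v j
  proof -
    have "count (labelled_edges es0 id + labelled_edges es l) (v, j) =
        of_bool (j < k \<and> v \<in> es0 ! j) + card {i. i < m \<and> l i = j \<and> v \<in> es ! i}"
      by (simp only: count_union count_labelled_edges_id[OF finite(2)] count_labelled_edges[OF finite(1)]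
          m_def k_def)
    then show ?thesis
      using even by metis
  qed
  have "{..<k} \<subseteq> l ` {..<m}"
  proof
    fix j assume "j \<in> {..<k}"
    then obtain v where "v \<in> es0 ! j"
      using nonempty unfolding k_def by (metis all_not_in_conv lessThan_iff nth_mem)
    then have "odd (card {i. i < m \<and> l i = j \<and> v \<in> es ! i})"
      using parity[of j v] \<open>j \<in> {..<k}\<close> by simp
    then obtain i where "i < m" "l i = j"
      by (metis (mono_tags, lifting) card.empty empty_Collect_eq even_zero)
    then show "j \<in> l ` {..<m}" by auto
  qed
  then have image: "l ` {..<m} = {..<k}"
    using labels unfolding m_def k_def by auto
  have "card (l ` {..<m}) = card {..<m}"
    using card_image_le[of "{..<m}" l] length image by (simp add: m_def k_def)
  then have inj: "inj_on l {..<m}"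
    by (simp add: eq_card_imp_inj_on)
  have nth_eq: "es ! i = es0 ! l i" if "i < m" for i
  proof -
    have fibre: "{i'. i' < m \<and> l i' = l i \<and> v \<in> es ! i'} = (if v \<in> es ! i then {i} else {})" for v
      using inj that by (auto simp: inj_on_def)
    have "l i < k"
      using labels that by (simp add: m_def k_def)
    have "v \<in> es0 ! l i \<longleftrightarrow> v \<in> es ! i" for v
      using parity[of "l i" v] \<open>l i < k\<close> by (auto simp: fibre split: if_splits)
    then show ?thesis
      by auto
  qed
  show ?thesis
    using inj image nth_eq unfolding m_def k_def by (intro mset_eq_if_nth_reindex) (auto simp: bij_betw_def)
qed

lemma inner_sum_axis:
  fixes a b :: "nat \<Rightarrow> real" and \<iota> :: "nat \<Rightarrow> 'n::finite"
  assumes "inj_on \<iota> {..<k}"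
  shows "inner (\<Sum>j<k. a j *\<^sub>R axis (\<iota> j) (1::real)) (\<Sum>j<k. b j *\<^sub>R axis (\<iota> j) 1) = (\<Sum>j<k. a j * b j)"
proof -
  have "inner (\<Sum>j<k. a j *\<^sub>R axis (\<iota> j) (1::real)) (\<Sum>j<k. b j *\<^sub>R axis (\<iota> j) 1) =
      (\<Sum>j<k. a j * (\<Sum>j'<k. b j' * inner (axis (\<iota> j) 1) (axis (\<iota> j') (1::real))))"
    by (simp only: inner_sum_left inner_scaleR_left) (simp only: inner_sum_right inner_scaleR_right)
  also have "\<dots> = (\<Sum>j<k. a j * b j)"
  proof (intro sum.cong refl)
    fix j assume "j \<in> {..<k}"
    moreover have "(\<Sum>j'<k. b j' * inner (axis (\<iota> j) 1) (axis (\<iota> j') (1::real))) =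
        (\<Sum>j'<k. if j' = j then b j' else 0)"
      using assms \<open>j \<in> {..<k}\<close> by (intro sum.cong refl) (auto simp: inner_axis_axis inj_on_def)
    ultimately show "a j * (\<Sum>j'<k. b j' * inner (axis (\<iota> j) 1) (axis (\<iota> j') (1::real))) = a j * b j"
      by simp
  qed
  finally show ?thesis .
qed

definition sign_point :: "nat \<Rightarrow> (nat \<Rightarrow> 'n::finite) \<Rightarrow> ('v \<times> nat \<Rightarrow> real) \<Rightarrow> 'v \<Rightarrow> real^'n" where
  "sign_point k \<iota> \<epsilon> v = (1 / sqrt k) *\<^sub>R (\<Sum>j<k. \<epsilon> (v, j) *\<^sub>R axis (\<iota> j) 1)"

lemma inner_sign_point:
  assumes "inj_on \<iota> {..<k}"
  shows "inner (sign_point k \<iota> \<epsilon> u) (sign_point k \<iota> \<epsilon> w) = (\<Sum>j<k. \<epsilon> (u, j) * \<epsilon> (w, j)) / real k"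
  unfolding sign_point_def by (simp add: inner_sum_axis[OF assms])

lemma sign_point_in_sphere:
  assumes "inj_on \<iota> {..<k}" "k > 0" "\<forall>j<k. \<epsilon> (v, j) \<in> {-1, 1}"
  shows "sign_point k \<iota> \<epsilon> v \<in> sphere 0 1"
proof -
  have "(\<Sum>j<k. \<epsilon> (v, j) * \<epsilon> (v, j)) = (\<Sum>j<k. 1)"
    using assms(3) by (intro sum.cong) auto
  then have "inner (sign_point k \<iota> \<epsilon> v) (sign_point k \<iota> \<epsilon> v) = 1"
    using assms(2) by (simp add: inner_sign_point[OF assms(1)])
  then show ?thesis
    by (simp add: norm_eq_sqrt_inner)
qed

lemma edge_ip_doubleton: "u \<noteq> w \<Longrightarrow> edge_ip d {u, w} = inner (d u) (d w)"
  unfolding edge_ip_def by (rule the_equality) (auto simp: doubleton_eq_iff inner_commute)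

lemma is_edge_finite: "is_edge e \<Longrightarrow> finite e"
  by (auto simp: is_edge_def)

lemma edge_ip_sign_point:
  assumes "inj_on \<iota> {..<k}" "is_edge e"
  shows "edge_ip (sign_point k \<iota> \<epsilon>) e = (\<Sum>j<k. \<Prod>v\<in>e. \<epsilon> (v, j)) / real k"
proof -
  obtain u w where "u \<noteq> w" "e = {u, w}"
    using assms(2) by (auto simp: is_edge_def)
  then show ?thesis
    by (simp add: edge_ip_doubleton inner_sign_point[OF assms(1)])
qed

lemma mG_sign_point:
  assumes "inj_on \<iota> {..<k}" "\<forall>e\<in>set es. is_edge e"
  shows "mG (mset es) (sign_point k \<iota> \<epsilon>) =
    (\<Sum>l\<in>PiE {..<length es} (\<lambda>_. {..<k}). prod_mset (image_mset \<epsilon> (labelled_edges es l))) / real k ^ length es"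
proof -
  have "mG (mset es) (sign_point k \<iota> \<epsilon>) = (\<Prod>i<length es. edge_ip (sign_point k \<iota> \<epsilon>) (es ! i))"
    unfolding mG_def by (simp add: prod_mset_prod_list prod.list_conv_set_nth atLeast0LessThan flip: mset_map)
  also have "\<dots> = (\<Prod>i<length es. \<Sum>j<k. \<Prod>v\<in>es ! i. \<epsilon> (v, j)) / real k ^ length es"
    using assms by (simp add: edge_ip_sign_point prod_dividef)
  also have "(\<Prod>i<length es. \<Sum>j<k. \<Prod>v\<in>es ! i. \<epsilon> (v, j)) =
      (\<Sum>l\<in>PiE {..<length es} (\<lambda>_. {..<k}). \<Prod>i<length es. \<Prod>v\<in>es ! i. \<epsilon> (v, l i))"
    by (rule prod_sum_PiE) auto
  also have "\<dots> = (\<Sum>l\<in>PiE {..<length es} (\<lambda>_. {..<k}). prod_mset (image_mset \<epsilon> (labelled_edges es l)))"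
    unfolding labelled_edges_def
    by (simp add: prod_mset_image_mset_sum prod_unfold_prod_mset multiset.map_comp comp_def)
  finally show ?thesis .
qed

definition even_labellings :: "'v set list \<Rightarrow> 'v set list \<Rightarrow> (nat \<Rightarrow> nat) set" where
  "even_labellings es0 es = {l \<in> PiE {..<length es} (\<lambda>_. {..<length es0}).
     \<forall>x. even (count (labelled_edges es0 id + labelled_edges es l) x)}"

lemma finite_even_labellings: "finite (even_labellings es0 es)"
  by (rule finite_subset[of _ "PiE {..<length es} (\<lambda>_. {..<length es0})"])
    (auto simp: even_labellings_def finite_PiE)

lemma restrict_id_in_even_labellings: "restrict id {..<length es0} \<in> even_labellings es0 es0"
proof -
  have "labelled_edges es0 (restrict id {..<length es0}) = labelled_edges es0 id"
    unfolding labelled_edges_def by (intro sum.cong) auto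
  then show ?thesis
    by (simp add: even_labellings_def)
qed

lemma even_labellings_eq_empty:
  assumes "\<forall>e\<in>set es. is_edge e" "\<forall>e\<in>set es0. is_edge e"
    and "length es \<le> length es0" "mset es \<noteq> mset es0"
  shows "even_labellings es0 es = {}"
proof (rule ccontr)
  assume "even_labellings es0 es \<noteq> {}"
  then obtain l where "l \<in> even_labellings es0 es"
    by blast
  moreover have "\<forall>e\<in>set es. finite e" "\<forall>e\<in>set es0. finite e" "{} \<notin> set es0"
    using assms(1,2) by (auto simp: is_edge_def)
  ultimately have "mset es = mset es0"
    using assms(3) by (intro even_labelled_edges_imp_mset_eq) (auto simp: even_labellings_def PiE_iff)
  then show False
    using assms(4) by simp
qed

lemma sum_signs_mG_sign_point:
  fixes es es0 :: "'v::finite set list" and \<iota> :: "nat \<Rightarrow> 'n::finite"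
  assumes "inj_on \<iota> {..<k}" "length es0 = k" "\<forall>e\<in>set es. is_edge e" "\<forall>e\<in>set es0. is_edge e"
  shows "(\<Sum>\<epsilon>\<in>PiE (UNIV \<times> {..<k}) (\<lambda>_. {-1, 1::real}).
      prod_mset (image_mset \<epsilon> (labelled_edges es0 id)) * mG (mset es) (sign_point k \<iota> \<epsilon>)) =
    2 ^ card (UNIV \<times> {..<k} :: ('v \<times> nat) set) * real (card (even_labellings es0 es)) / real k ^ length es"
proof -
  define A :: "('v \<times> nat) set" where "A = UNIV \<times> {..<k}"
  define L where "L = PiE {..<length es} (\<lambda>_. {..<k})"
  define M where "M l = labelled_edges es0 id + labelled_edges es l" for l
  have M_in_A: "set_mset (M l) \<subseteq> A" if "l \<in> L" for l
    using that assms(2-4) set_mset_labelled_edges[of es0 id k] set_mset_labelled_edges[of es l k]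
    by (auto simp: M_def A_def L_def is_edge_finite PiE_iff)
  have "(\<Sum>\<epsilon>\<in>PiE A (\<lambda>_. {-1, 1::real}).
      prod_mset (image_mset \<epsilon> (labelled_edges es0 id)) * mG (mset es) (sign_point k \<iota> \<epsilon>)) =
    (\<Sum>\<epsilon>\<in>PiE A (\<lambda>_. {-1, 1::real}). \<Sum>l\<in>L. prod_mset (image_mset \<epsilon> (M l))) / real k ^ length es"
    using assms(1,3)
    by (simp add: mG_sign_point L_def M_def sum_distrib_left sum_divide_distrib)
  also have "\<dots> = (\<Sum>l\<in>L. \<Sum>\<epsilon>\<in>PiE A (\<lambda>_. {-1, 1::real}). prod_mset (image_mset \<epsilon> (M l))) / real k ^ length es"
    by (subst sum.swap) (rule refl)
  also have "\<dots> = (\<Sum>l\<in>L. if \<forall>x. even (count (M l) x) then 2 ^ card A else 0) / real k ^ length es"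
  proof (intro arg_cong2[where f = "(/)"] sum.cong refl)
    fix l assume "l \<in> L"
    then have "(\<forall>x\<in>A. even (count (M l) x)) \<longleftrightarrow> (\<forall>x. even (count (M l) x))"
      using M_in_A by (metis count_eq_zero_iff even_zero subsetD)
    then show "(\<Sum>\<epsilon>\<in>PiE A (\<lambda>_. {-1, 1::real}). prod_mset (image_mset \<epsilon> (M l))) =
        (if \<forall>x. even (count (M l) x) then 2 ^ card A else 0)"
      using sum_sign_vectors_prod_mset[OF _ M_in_A[OF \<open>l \<in> L\<close>]] by (simp add: A_def)
  qed
  also have "(\<Sum>l\<in>L. if \<forall>x. even (count (M l) x) then 2 ^ card A else 0) =
      (\<Sum>l\<in>even_labellings es0 es. 2 ^ card A :: real)"
    unfolding even_labellings_def L_def M_def using assms(2)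
    by (subst sum.inter_filter) (simp_all add: finite_PiE)
  also have "\<dots> = 2 ^ card A * real (card (even_labellings es0 es))"
    by simp
  finally show ?thesis
    by (simp only: A_def)
qed

lemma multigraph_separating_sum:
  fixes G0 :: "'v::finite set multiset"
  assumes "G0 \<in> multigraphs" "size G0 < CARD('n::finite)"
  shows "\<exists>(S :: ('v \<times> nat \<Rightarrow> real) set) (P :: _ \<Rightarrow> 'v \<Rightarrow> real^'n) w.
    finite S \<and> P ` S \<subseteq> {d. \<forall>v. d v \<in> sphere 0 1} \<and>
    (\<Sum>s\<in>S. w s * mG G0 (P s)) \<noteq> 0 \<and>
    (\<forall>G\<in>multigraphs. G \<noteq> G0 \<longrightarrow> size G \<le> size G0 \<longrightarrow> (\<Sum>s\<in>S. w s * mG G (P s)) = 0)"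
proof -
  obtain es0 where es0: "mset es0 = G0"
    using ex_mset by blast
  define k where "k = length es0"
  have edges0: "\<forall>e\<in>set es0. is_edge e"
    using assms(1) es0 by (auto simp: multigraphs_def)
  show ?thesis
  proof (cases "k = 0")
    case True
    then have "G0 = {#}"
      using es0 k_def by auto
    then show ?thesis
      by (intro exI[of _ "{\<lambda>_. 0}"] exI[of _ "\<lambda>_ _. axis undefined 1"] exI[of _ "\<lambda>_. 1"])
        (auto simp: mG_def)
  next
    case False
    obtain \<iota> :: "nat \<Rightarrow> 'n" where \<iota>: "inj_on \<iota> {..<k}"
      using card_le_inj[of "{..<k}" "UNIV :: 'n set"] assms(2) es0 k_def by auto
    define E where "E = PiE (UNIV \<times> {..<k}) (\<lambda>_ :: 'v \<times> nat. {-1, 1::real})"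
    define w where "w \<epsilon> = prod_mset (image_mset \<epsilon> (labelled_edges es0 id))" for \<epsilon> :: "'v \<times> nat \<Rightarrow> real"
    have test_value: "(\<Sum>\<epsilon>\<in>E. w \<epsilon> * mG G (sign_point k \<iota> \<epsilon>)) =
        2 ^ card (UNIV \<times> {..<k} :: ('v \<times> nat) set) * real (card (even_labellings es0 es)) / real k ^ size G"
      if "G \<in> multigraphs" "mset es = G" for G es
      using sum_signs_mG_sign_point[OF \<iota> k_def[symmetric], of es] that edges0
      by (auto simp: E_def w_def multigraphs_def)
    have "card (even_labellings es0 es0) > 0"
      using restrict_id_in_even_labellings[of es0] finite_even_labellings[of es0 es0]
      by (auto simp: card_gt_0_iff)
    then have "(\<Sum>\<epsilon>\<in>E. w \<epsilon> * mG G0 (sign_point k \<iota> \<epsilon>)) \<noteq> 0"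
      using test_value[OF assms(1) es0] False by simp
    moreover have "(\<Sum>\<epsilon>\<in>E. w \<epsilon> * mG G (sign_point k \<iota> \<epsilon>)) = 0"
      if "G \<in> multigraphs" "G \<noteq> G0" "size G \<le> size G0" for G
    proof -
      obtain es where es: "mset es = G"
        using ex_mset by blast
      then have "even_labellings es0 es = {}"
        using that edges0 es0 by (intro even_labellings_eq_empty) (auto simp: multigraphs_def)
      then show ?thesis
        using test_value[OF that(1) es] by simp
    qed
    moreover have "sign_point k \<iota> \<epsilon> \<in> {d. \<forall>v. d v \<in> sphere 0 1}" if "\<epsilon> \<in> E" for \<epsilon>
    proof -
      have "\<forall>v. sign_point k \<iota> \<epsilon> v \<in> sphere 0 1"
        using that False by (intro allI sign_point_in_sphere[OF \<iota>]) (auto simp: E_def PiE_iff)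
      then show ?thesis
        by simp
    qed
    ultimately show ?thesis
      by (intro exI[of _ E] exI[of _ "sign_point k \<iota>"] exI[of _ w]) (auto simp: E_def finite_PiE)
  qed
qed

theorem mainTheorem6:
  assumes "CARD('n) \<ge> 2"
  shows "lin_indep_on {d :: 'v::finite \<Rightarrow> real^'n. \<forall>v. d v \<in> sphere 0 1}
           mG {G \<in> multigraphs. size G \<le> CARD('n) - 1}"
proof (rule lin_indep_onI_separating[where J = multigraphs and r = size])
  fix G :: "'v set multiset"
  assume "G \<in> {G \<in> multigraphs. size G \<le> CARD('n) - 1}"
  then show "\<exists>(S :: ('v \<times> nat \<Rightarrow> real) set) (P :: _ \<Rightarrow> 'v \<Rightarrow> real^'n) w. finite S \<and>
      P ` S \<subseteq> {d. \<forall>v. d v \<in> sphere 0 1} \<and> (\<Sum>s\<in>S. w s * mG G (P s)) \<noteq> 0 \<and>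
      (\<forall>G'\<in>multigraphs. G' \<noteq> G \<longrightarrow> size G' \<le> size G \<longrightarrow> (\<Sum>s\<in>S. w s * mG G' (P s)) = 0)"
    using assms by (intro multigraph_separating_sum) auto
qed auto

end
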